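(* Let $G$ be a simple, undirected, connected graph on $N$ vertices with edge set $E$ and degree sequence $d_1\le d_2\le\cdots\le d_N$. Then $$R^+(G)\ge N(N-4)+2|E|\sum_{j=1}^N\frac{1}{d_j}.$$
   Context: For vertices $i,j$ of $G$, $R_{ij}$ denotes the effective resistance between $i$ and $j$ when every edge of $G$ is a unit resistor. The additive degree-Kirchhoff index is $R^+(G)=\sum_{i<j}(d_i+d_j)R_{ij}$, where $d_i$ is the degree of vertex $i$. *)

theory Defs
  imports Complex_Main
begin

definition simple_graph :: "nat \<Rightarrow> nat set set \<Rightarrow> bool" where
  "simple_graph N E \<longleftrightarrow> (\<forall>e\<in>E. \<exists>u v. u < N \<and> v < N \<and> u \<noteq> v \<and> e = {u, v})"

definition adj :: "nat set set \<Rightarrow> nat \<Rightarrow> nat \<Rightarrow> bool" where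
  "adj E u v \<longleftrightarrow> {u, v} \<in> E"

definition connected_graph :: "nat \<Rightarrow> nat set set \<Rightarrow> bool" where
  "connected_graph N E \<longleftrightarrow> (\<forall>u<N. \<forall>v<N. (u, v) \<in> {(a, b). adj E a b}\<^sup>*)"

definition degree :: "nat \<Rightarrow> nat set set \<Rightarrow> nat \<Rightarrow> nat" where
  "degree N E v = card {u. u < N \<and> adj E u v}"

text \<open>Effective resistance between i and j with unit resistors: inject a unit current at i,
  extract it at j; by Kirchhoff's laws the node potentials x satisfy (L x)_k = [k=i] - [k=j],
  and R_ij is the potential difference x_i - x_j.\<close>

definition eff_res :: "nat \<Rightarrow> nat set set \<Rightarrow> nat \<Rightarrow> nat \<Rightarrow> real" where
  "eff_res N E i j = (THE r. \<exists>x :: nat \<Rightarrow> real.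
      (\<forall>k<N. (\<Sum>l<N. if adj E k l then x k - x l else 0)
              = (if k = i then 1 else 0) - (if k = j then 1 else 0))
      \<and> r = x i - x j)"

definition add_deg_kirchhoff :: "nat \<Rightarrow> nat set set \<Rightarrow> real" where
  "add_deg_kirchhoff N E =
     (\<Sum>j<N. \<Sum>i<j. (real (degree N E i) + real (degree N E j)) * eff_res N E i j)"

end

theory Submission
  imports Defs "HOL-Analysis.Convex" "Jordan_Normal_Form.Determinant"
begin

text \<open>Let \<open>x\<close> be the potential of a unit current from \<open>i\<close> to \<open>j\<close>, so that
  \<open>R = R\<^sub>i\<^sub>j = x\<^sub>i - x\<^sub>j\<close> equals the energy \<open>\<Sum>\<^sub>k\<^sub>l (x\<^sub>k - x\<^sub>l)\<^sup>2\<close> over the edges.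
  Keeping only the edges at \<open>i\<close> or \<open>j\<close> gives \<open>R \<ge> W\<^sub>i + W\<^sub>j - w\<^sub>i\<^sub>j\<close>, where \<open>W\<^sub>v\<close> is
  the energy of the edges at \<open>v\<close>. Cauchy-Schwarz applied to the current law at \<open>i\<close> gives
  \<open>1 \<le> d\<^sub>i W\<^sub>i\<close>, and, if \<open>i\<close> and \<open>j\<close> are adjacent, applied to the other \<open>d\<^sub>i - 1\<close> edges it gives
  \<open>(1 - R)\<^sup>2 \<le> (d\<^sub>i - 1) (W\<^sub>i - R\<^sup>2)\<close>; likewise at \<open>j\<close>. Elementary algebra turns these into
  \<open>R\<^sub>i\<^sub>j \<ge> 1/d\<^sub>i + 1/d\<^sub>j - 2[i \<sim> j]/(d\<^sub>i d\<^sub>j)\<close>, and summing these bounds with weights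
  \<open>d\<^sub>i + d\<^sub>j\<close> evaluates, by the handshake lemma, to the right-hand side of the theorem.\<close>

hide_const (open) Polynomial.degree

section \<open>Simple graphs\<close>

lemma adj_commute: "adj E u v = adj E v u"
  by (simp add: adj_def insert_commute)

lemma not_adj_self: "simple_graph N E \<Longrightarrow> \<not> adj E u u"
  unfolding simple_graph_def adj_def by (metis doubleton_eq_iff)

lemma adj_imp_less: "simple_graph N E \<Longrightarrow> adj E u v \<Longrightarrow> u < N \<and> v < N"
  unfolding simple_graph_def adj_def by (metis doubleton_eq_iff)

lemma simple_graph_finite: "simple_graph N E \<Longrightarrow> finite E"
  unfolding simple_graph_def by (rule finite_subset[of _ "Pow {..<N}"]) auto

lemma degree_eq_card_neighbours: "degree N E v = card {l \<in> {..<N}. adj E v l}"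
  unfolding Defs.degree_def by (rule arg_cong[where f = card]) (auto simp: adj_commute)

lemma sum_neighbours_const: "(\<Sum>l<N. if adj E k l then c else 0) = c * real (degree N E k)"
  by (simp add: degree_eq_card_neighbours flip: sum.inter_filter)

lemma degree_ge_1:
  assumes "simple_graph N E" "connected_graph N E" "N \<ge> 2" "v < N"
  shows "degree N E v \<ge> 1"
proof -
  define w where "w = (if v = 0 then 1 else 0 :: nat)"
  have w: "w < N" "v \<noteq> w"
    using assms(3) by (auto simp: w_def)
  have "(v, w) \<in> {(a, b). adj E a b}\<^sup>*"
    using assms(2,4) w(1) unfolding connected_graph_def by blast
  then have "v = w \<or> (\<exists>u. adj E v u)"
    by (cases rule: converse_rtranclE) auto
  then obtain u where "adj E u v"
    using w(2) adj_commute by blast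
  then have "u \<in> {u. u < N \<and> adj E u v}"
    using adj_imp_less[OF assms(1)] by blast
  then have "card {u. u < N \<and> adj E u v} > 0"
    by (intro card_gt_0_iff[THEN iffD2]) auto
  then show ?thesis
    by (simp add: Defs.degree_def)
qed

lemma card_pairs_of_doubleton:
  assumes "a \<noteq> b"
  shows "card {(v, u). {u, v} = {a, b}} = 2"
proof -
  have "{(v, u). {u, v} = {a, b}} = {(a, b), (b, a)}"
    by (auto simp: doubleton_eq_iff)
  then show ?thesis using assms by simp
qed

lemma sum_degree_eq_twice_card_edges:
  assumes sg: "simple_graph N E"
  shows "(\<Sum>v<N. degree N E v) = 2 * card E"
proof -
  define ends where "ends e = {(v, u). {u, v} = e}" for e :: "nat set"
  have card_ends: "card (ends e) = 2" if "e \<in> E" for e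
    using sg that unfolding simple_graph_def ends_def by (metis card_pairs_of_doubleton)
  have "(\<Sum>v<N. degree N E v) = card (SIGMA v:{..<N}. {u. u < N \<and> adj E u v})"
    unfolding Defs.degree_def by (rule card_SigmaI[symmetric]) auto
  also have "(SIGMA v:{..<N}. {u. u < N \<and> adj E u v}) = (\<Union>e\<in>E. ends e)"
    using adj_imp_less[OF sg] by (auto simp: ends_def adj_def)
  also have "card \<dots> = (\<Sum>e\<in>E. card (ends e))"
    using card_ends by (intro card_UN_disjoint simple_graph_finite[OF sg])
      (auto simp: ends_def intro: card_ge_0_finite)
  also have "\<dots> = (\<Sum>e\<in>E. 2)"
    using card_ends by simp
  finally show ?thesis by simp
qed

section \<open>The graph Laplacian\<close>

definition laplacian :: "nat \<Rightarrow> nat set set \<Rightarrow> (nat \<Rightarrow> real) \<Rightarrow> nat \<Rightarrow> real" where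
  "laplacian N E x k = (\<Sum>l<N. if adj E k l then x k - x l else 0)"

definition local_energy :: "nat \<Rightarrow> nat set set \<Rightarrow> (nat \<Rightarrow> real) \<Rightarrow> nat \<Rightarrow> real" where
  "local_energy N E x v = (\<Sum>l<N. if adj E v l then (x v - x l)^2 else 0)"

lemma laplacian_diff:
  "laplacian N E (\<lambda>k. x k - y k) k = laplacian N E x k - laplacian N E y k"
  unfolding laplacian_def
  by (simp add: sum_subtractf[symmetric] if_distrib algebra_simps cong: if_cong)

lemma sum_laplacian: "(\<Sum>k<N. laplacian N E x k) = 0"
proof -
  let ?f = "\<lambda>k l. if adj E k l then x k - x l else (0::real)"
  have "(\<Sum>k<N. \<Sum>l<N. ?f k l) = (\<Sum>l<N. \<Sum>k<N. - ?f l k)"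
    by (subst sum.swap) (auto simp: adj_commute intro!: sum.cong)
  then show ?thesis
    unfolding laplacian_def by (simp add: sum_negf)
qed

lemma sum_mult_laplacian:
  "(\<Sum>k<N. x k * laplacian N E x k) = (\<Sum>k<N. local_energy N E x k) / 2"
proof -
  let ?f = "\<lambda>k l. if adj E k l then x k * (x k - x l) else (0::real)"
  let ?g = "\<lambda>k l. if adj E k l then - x l * (x k - x l) else (0::real)"
  have f: "(\<Sum>k<N. x k * laplacian N E x k) = (\<Sum>k<N. \<Sum>l<N. ?f k l)"
    unfolding laplacian_def sum_distrib_left by (intro sum.cong refl) auto
  have fg: "(\<Sum>k<N. \<Sum>l<N. ?f k l) = (\<Sum>k<N. \<Sum>l<N. ?g k l)"
    by (subst sum.swap) (auto simp: adj_commute algebra_simps intro!: sum.cong)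
  have "(\<Sum>k<N. \<Sum>l<N. ?f k l) + (\<Sum>k<N. \<Sum>l<N. ?g k l) = (\<Sum>k<N. local_energy N E x k)"
    unfolding local_energy_def
    by (simp add: sum.distrib[symmetric] power2_eq_square algebra_simps if_distrib cong: if_cong)
  then show ?thesis using f fg by simp
qed

lemma laplacian_eq_0_imp_const:
  assumes sg: "simple_graph N E" and cg: "connected_graph N E"
    and z: "\<forall>k<N. laplacian N E z k = 0" and "a < N" "b < N"
  shows "z a = z b"
proof -
  have "(\<Sum>k<N. local_energy N E z k) = 0"
    using sum_mult_laplacian[of z N E] z by simp
  then have local_zero: "local_energy N E z k = 0" if "k < N" for k
    using that by (subst (asm) sum_nonneg_eq_0_iff) (auto simp: local_energy_def intro!: sum_nonneg)
  have edge: "z k = z l" if "k < N" "l < N" "adj E k l" for k l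
  proof -
    have "(if adj E k l then (z k - z l)^2 else 0) = 0"
      using local_zero[OF that(1)] that(2) unfolding local_energy_def
      by (subst (asm) sum_nonneg_eq_0_iff) auto
    then show ?thesis using that(3) by simp
  qed
  from cg assms(4,5) have "(a, b) \<in> {(a, b). adj E a b}\<^sup>*"
    unfolding connected_graph_def by auto
  then show ?thesis
    by (induction rule: rtrancl_induct) (auto dest: edge adj_imp_less[OF sg])
qed

lemma laplacian_sq_le: "(laplacian N E x v)^2 \<le> real (degree N E v) * local_energy N E x v"
proof -
  let ?S = "{l \<in> {..<N}. adj E v l}"
  have "laplacian N E x v = (\<Sum>l\<in>?S. x v - x l)"
    "local_energy N E x v = (\<Sum>l\<in>?S. (x v - x l)^2)"
    unfolding laplacian_def local_energy_def by (simp_all flip: sum.inter_filter)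
  then show ?thesis
    unfolding degree_eq_card_neighbours using sum_squared_le_sum_of_squares by (simp add: mult.commute)
qed

lemma laplacian_minus_edge_sq_le:
  assumes "adj E v u" "u < N"
  shows "(laplacian N E x v - (x v - x u))^2
    \<le> (real (degree N E v) - 1) * (local_energy N E x v - (x v - x u)^2)"
proof -
  let ?S = "{l \<in> {..<N}. adj E v l}"
  have u: "u \<in> ?S" and fin: "finite ?S" using assms by auto
  have "laplacian N E x v = (x v - x u) + (\<Sum>l\<in>?S - {u}. x v - x l)"
    "local_energy N E x v = (x v - x u)^2 + (\<Sum>l\<in>?S - {u}. (x v - x l)^2)"
    unfolding laplacian_def local_energy_def sum.inter_filter[symmetric, OF finite_lessThan]
    using sum.remove[OF fin u, of "\<lambda>l. x v - x l"] sum.remove[OF fin u, of "\<lambda>l. (x v - x l)^2"]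
    by simp_all
  moreover have "real (card (?S - {u})) = real (degree N E v) - 1"
  proof -
    have "card ?S \<ge> 1"
      using u fin by (metis One_nat_def Suc_leI card_gt_0_iff empty_iff)
    then show ?thesis
      using u fin by (simp add: degree_eq_card_neighbours card_Diff_singleton)
  qed
  ultimately show ?thesis
    using sum_squared_le_sum_of_squares[of "\<lambda>l. x v - x l" "?S - {u}"] by (simp add: mult.commute)
qed

text \<open>The Laplacian is singular; adding the all-ones matrix makes it invertible on a connected
  graph, and a solution of the modified system has zero mean whenever the right-hand side does.\<close>

definition laplacian_plus_ones :: "nat \<Rightarrow> nat set set \<Rightarrow> real mat" where
  "laplacian_plus_ones N E = mat N N (\<lambda>(k, l).
     (if k = l then (\<Sum>m<N. if adj E k m then 1 else 0) else 0) - (if adj E k l then 1 else 0) + 1)"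

lemma laplacian_plus_ones_mult_vec:
  assumes v: "dim_vec v = N" and k: "k < N"
  shows "(laplacian_plus_ones N E *\<^sub>v v) $ k = laplacian N E (\<lambda>i. v $ i) k + (\<Sum>l<N. v $ l)"
proof -
  let ?d = "\<Sum>m<N. if adj E k m then 1 else (0::real)"
  have "(laplacian_plus_ones N E *\<^sub>v v) $ k
      = (\<Sum>l<N. ((if k = l then ?d else 0) - (if adj E k l then 1 else 0) + 1) * v $ l)"
    using v k unfolding laplacian_plus_ones_def by (simp add: scalar_prod_def lessThan_atLeast0)
  also have "\<dots> = (\<Sum>l<N. if k = l then ?d * v $ l else 0)
      - (\<Sum>l<N. if adj E k l then v $ l else 0) + (\<Sum>l<N. v $ l)"
  proof -
    have "((if k = l then ?d else 0) - (if adj E k l then 1 else 0) + 1) * v $ l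
        = (if k = l then ?d * v $ l else 0) - (if adj E k l then v $ l else 0) + v $ l" for l
      by (simp add: algebra_simps)
    then show ?thesis by (simp add: sum.distrib sum_subtractf)
  qed
  also have "(\<Sum>l<N. if k = l then ?d * v $ l else 0) = (\<Sum>m<N. if adj E k m then v $ k else 0)"
    using k by (simp add: sum_distrib_right) (intro sum.cong refl, simp)
  also have "(\<Sum>m<N. if adj E k m then v $ k else 0) - (\<Sum>l<N. if adj E k l then v $ l else 0)
      = laplacian N E (\<lambda>i. v $ i) k"
    unfolding laplacian_def by (simp add: sum_subtractf[symmetric]) (intro sum.cong refl, simp)
  finally show ?thesis .
qed

lemma laplacian_plus_ones_solution:
  assumes "N \<ge> 1" "(\<Sum>k<N. b k) = 0"
    and v: "dim_vec v = N" "\<forall>k<N. (laplacian_plus_ones N E *\<^sub>v v) $ k = b k"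
  shows "\<forall>k<N. laplacian N E (\<lambda>i. v $ i) k = b k"
proof -
  have eq: "laplacian N E (\<lambda>i. v $ i) k + (\<Sum>l<N. v $ l) = b k" if "k < N" for k
    using v that laplacian_plus_ones_mult_vec by metis
  then have "(\<Sum>k<N. laplacian N E (\<lambda>i. v $ i) k + (\<Sum>l<N. v $ l)) = 0"
    using assms(2) by simp
  then have "(\<Sum>l<N. v $ l) = 0"
    using assms(1) by (simp add: sum.distrib sum_laplacian)
  then show ?thesis using eq by simp
qed

lemma laplacian_plus_ones_det_nonzero:
  assumes N: "N \<ge> 1" and sg: "simple_graph N E" and cg: "connected_graph N E"
  shows "det (laplacian_plus_ones N E) \<noteq> 0"
proof
  assume det: "det (laplacian_plus_ones N E) = 0"
  have "laplacian_plus_ones N E \<in> carrier_mat N N"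
    unfolding laplacian_plus_ones_def by simp
  from det_0_iff_vec_prod_zero[OF this] det
  have "\<exists>v. v \<in> carrier_vec N \<and> v \<noteq> 0\<^sub>v N \<and> laplacian_plus_ones N E *\<^sub>v v = 0\<^sub>v N"
    by simp
  then obtain v where v: "v \<in> carrier_vec N" "v \<noteq> 0\<^sub>v N"
    and zero: "laplacian_plus_ones N E *\<^sub>v v = 0\<^sub>v N"
    by blast
  have lap: "\<forall>k<N. laplacian N E (\<lambda>i. v $ i) k = 0"
    by (rule laplacian_plus_ones_solution[OF N]) (use v zero in auto)
  define c where "c = v $ 0"
  have const: "v $ k = c" if "k < N" for k
    unfolding c_def using laplacian_eq_0_imp_const[OF sg cg lap that, of 0] N by simp
  have "(\<Sum>l<N. v $ l) = 0"
    using laplacian_plus_ones_mult_vec[of v N 0 E] lap zero v(1) N by simp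
  then have "c = 0"
    using const N by simp
  then have "v = 0\<^sub>v N"
    using const v(1) by (intro eq_vecI) auto
  with v(2) show False ..
qed

lemma laplacian_solvable:
  assumes N: "N \<ge> 1" and sg: "simple_graph N E" and cg: "connected_graph N E"
    and b: "(\<Sum>k<N. b k) = 0"
  shows "\<exists>x. \<forall>k<N. laplacian N E x k = b k"
proof -
  let ?M = "laplacian_plus_ones N E"
  have M: "?M \<in> carrier_mat N N"
    unfolding laplacian_plus_ones_def by simp
  have "?M \<in> Units (ring_mat TYPE(real) N undefined)"
    by (rule det_non_zero_imp_unit[OF M laplacian_plus_ones_det_nonzero[OF N sg cg]])
  then obtain B where B: "B \<in> carrier_mat N N" "?M * B = 1\<^sub>m N"
    by (auto simp: Units_def ring_mat_def)
  have "?M *\<^sub>v (B *\<^sub>v vec N b) = vec N b"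
    using M B by (simp flip: assoc_mult_mat_vec)
  then have "\<forall>k<N. laplacian N E (\<lambda>i. (B *\<^sub>v vec N b) $ i) k = b k"
    using B(1) by (intro laplacian_plus_ones_solution[OF N b]) auto
  then show ?thesis by blast
qed

section \<open>Effective resistance\<close>

definition unit_current_potential ::
    "nat \<Rightarrow> nat set set \<Rightarrow> nat \<Rightarrow> nat \<Rightarrow> (nat \<Rightarrow> real) \<Rightarrow> bool" where
  "unit_current_potential N E i j x \<longleftrightarrow>
     (\<forall>k<N. laplacian N E x k = (if k = i then 1 else 0) - (if k = j then 1 else 0))"

lemma unit_current_potential_exists:
  assumes "simple_graph N E" "connected_graph N E" "i < N" "j < N"
  shows "\<exists>x. unit_current_potential N E i j x"
  unfolding unit_current_potential_def
  using assms by (intro laplacian_solvable) (auto simp: sum_subtractf)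

lemma eff_res_eq_potential_diff:
  assumes sg: "simple_graph N E" and cg: "connected_graph N E"
    and x: "unit_current_potential N E i j x" and "i < N" "j < N"
  shows "eff_res N E i j = x i - x j"
  unfolding eff_res_def
proof (rule the_equality)
  show "\<exists>y. (\<forall>k<N. (\<Sum>l<N. if adj E k l then y k - y l else 0) =
      (if k = i then 1 else 0) - (if k = j then 1 else 0)) \<and> x i - x j = y i - y j"
    using x unfolding unit_current_potential_def laplacian_def by blast
next
  fix r :: real
  assume "\<exists>y. (\<forall>k<N. (\<Sum>l<N. if adj E k l then y k - y l else 0) =
      (if k = i then 1 else 0) - (if k = j then 1 else 0)) \<and> r = y i - y j"
  then obtain y where y: "unit_current_potential N E i j y" and r: "r = y i - y j"
    unfolding unit_current_potential_def laplacian_def by blast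
  have "\<forall>k<N. laplacian N E (\<lambda>k. x k - y k) k = 0"
    using x y by (simp add: laplacian_diff unit_current_potential_def)
  from laplacian_eq_0_imp_const[OF sg cg this assms(4,5)] show "r = x i - x j"
    using r by simp
qed

lemma sum_remove_two:
  assumes "finite A" "i \<in> A" "j \<in> A" "i \<noteq> j"
  shows "sum f A = f i + f j + sum f (A - {i, j})"
proof -
  have "sum f A = f i + sum f (A - {i})"
    using assms sum.remove by metis
  also have "sum f (A - {i}) = f j + sum f (A - {i} - {j})"
    using assms by (intro sum.remove) auto
  finally show ?thesis
    by (simp add: add.assoc Diff_insert2[symmetric])
qed

lemma potential_diff_eq_energy:
  assumes "unit_current_potential N E i j x" "i < N" "j < N"
  shows "x i - x j = (\<Sum>k<N. local_energy N E x k) / 2"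
proof -
  have "(\<Sum>k<N. x k * laplacian N E x k) = (\<Sum>k<N. (if k = i then x k else 0) - (if k = j then x k else 0))"
    using assms(1) unfolding unit_current_potential_def by (intro sum.cong refl) simp
  also have "\<dots> = x i - x j"
    using assms(2,3) by (simp add: sum_subtractf)
  finally show ?thesis
    by (simp add: sum_mult_laplacian)
qed

text \<open>Only the energy of the edges at \<open>i\<close> or \<open>j\<close> is kept; the edge \<open>ij\<close> lies in both
  local energies, whence the correction term.\<close>

lemma potential_diff_ge_local_energies:
  assumes sg: "simple_graph N E" and x: "unit_current_potential N E i j x"
    and i: "i < N" and j: "j < N" and ij: "i \<noteq> j"
  shows "x i - x j \<ge> local_energy N E x i + local_energy N E x j
           - (if adj E i j then (x i - x j)^2 else 0)"
proof -
  define w where "w k l = (if adj E k l then (x k - x l)^2 else (0::real))" for k l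
  let ?A = "{..<N} - {i, j}"
  have w_sym: "w k l = w l k" for k l
    by (simp add: w_def adj_commute power2_commute)
  have w_diag: "w k k = 0" for k
    using not_adj_self[OF sg] by (simp add: w_def)
  have row: "local_energy N E x k = (\<Sum>l<N. w k l)" for k
    by (simp add: local_energy_def w_def)
  have column: "local_energy N E x k = (\<Sum>l<N. w l k)" for k
    unfolding row by (simp add: w_sym)
  have "x i - x j = (local_energy N E x i + local_energy N E x j
                    + (\<Sum>k\<in>?A. local_energy N E x k)) / 2"
    using potential_diff_eq_energy[OF x i j] by (simp add: sum_remove_two[OF _ _ _ ij] i j)
  also have "(\<Sum>k\<in>?A. local_energy N E x k) \<ge> (\<Sum>k\<in>?A. w k i + w k j)"
  proof (rule sum_mono)
    fix k
    have "(\<Sum>l\<in>?A. w k l) \<ge> 0"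
      by (intro sum_nonneg) (simp add: w_def)
    then show "w k i + w k j \<le> local_energy N E x k"
      unfolding row by (simp add: sum_remove_two[OF _ _ _ ij] i j)
  qed
  moreover have "(\<Sum>k\<in>?A. w k i + w k j) = local_energy N E x i + local_energy N E x j - 2 * w i j"
    using column[of i] column[of j] w_diag w_sym[of j i]
    by (simp add: sum.distrib sum_remove_two[OF _ _ _ ij] i j)
  ultimately show ?thesis
    by (simp add: w_def)
qed

text \<open>In the application \<open>R = R\<^sub>i\<^sub>j\<close>, \<open>a = d\<^sub>i\<close>, \<open>b = d\<^sub>j\<close>, and \<open>Ti\<close>, \<open>Tj\<close> are the energies
  of the edges at \<open>i\<close>, resp. \<open>j\<close>, other than \<open>ij\<close>.\<close>

lemma resistance_bound_algebraic:
  fixes a b R Ti Tj :: real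
  assumes a: "a \<ge> 1" and b: "b \<ge> 1" and R0: "R \<ge> 0"
    and h: "R \<ge> R^2 + Ti + Tj"
    and hi: "(1 - R)^2 \<le> (a - 1) * Ti" and hj: "(1 - R)^2 \<le> (b - 1) * Tj"
  shows "R \<ge> 1/a + 1/b - 2/(a*b)"
proof -
  have ab: "a * b > 0" and pab: "(a - 1) * (b - 1) \<ge> 0"
    using a b by simp_all
  have "R * (a * b) \<ge> a + b - 2"
  proof (cases "R \<ge> 1")
    case True
    have "a + b - 2 \<le> a * b" using pab by (simp add: algebra_simps)
    also have "\<dots> \<le> R * (a * b)" using mult_right_mono[OF True, of "a*b"] ab by simp
    finally show ?thesis .
  next
    case False
    define s where "s = 1 - R"
    have s: "s > 0" using False by (simp add: s_def)
    have "(Ti + Tj) * ((a - 1) * (b - 1)) \<le> R * s * ((a - 1) * (b - 1))"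
      using h pab by (intro mult_right_mono) (simp_all add: s_def power2_eq_square algebra_simps)
    moreover have "s^2 * (b - 1) \<le> ((a - 1) * Ti) * (b - 1)" "s^2 * (a - 1) \<le> ((b - 1) * Tj) * (a - 1)"
      using hi hj a b by (intro mult_right_mono; simp add: s_def)+
    ultimately have "s * (s * (a + b - 2)) \<le> s * (R * ((a - 1) * (b - 1)))"
      by (simp add: power2_eq_square algebra_simps)
    then have "s * (a + b - 2) \<le> R * ((a - 1) * (b - 1))"
      using s by simp
    then show ?thesis
      using R0 by (simp add: s_def algebra_simps)
  qed
  moreover have "1/a + 1/b - 2/(a*b) = (a + b - 2) / (a * b)"
    using a b by (simp add: field_simps)
  ultimately show ?thesis
    using ab by (simp add: divide_le_eq)
qed

definition resistance_lower_bound :: "nat \<Rightarrow> nat set set \<Rightarrow> nat \<Rightarrow> nat \<Rightarrow> real" where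
  "resistance_lower_bound N E i j =
     1 / real (degree N E i) + 1 / real (degree N E j)
     - (if adj E i j then 2 / (real (degree N E i) * real (degree N E j)) else 0)"

lemma eff_res_ge_lower_bound:
  assumes sg: "simple_graph N E" and cg: "connected_graph N E"
    and i: "i < N" and j: "j < N" and ij: "i \<noteq> j"
  shows "eff_res N E i j \<ge> resistance_lower_bound N E i j"
proof -
  obtain x where x: "unit_current_potential N E i j x"
    using unit_current_potential_exists[OF sg cg i j] ..
  define R where "R = x i - x j"
  define a where "a = real (degree N E i)"
  define b where "b = real (degree N E j)"
  have N: "N \<ge> 2" using i j ij by linarith
  have a: "a \<ge> 1" and b: "b \<ge> 1"
    using degree_ge_1[OF sg cg N] i j by (simp_all add: a_def b_def)
  have lap: "laplacian N E x i = 1" "laplacian N E x j = -1"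
    using x i j ij by (simp_all add: unit_current_potential_def)
  have energy: "R \<ge> local_energy N E x i + local_energy N E x j - (if adj E i j then R^2 else 0)"
    using potential_diff_ge_local_energies[OF sg x i j ij] unfolding R_def .
  have Wi: "1 / a \<le> local_energy N E x i" and Wj: "1 / b \<le> local_energy N E x j"
    using laplacian_sq_le[of N E x i] laplacian_sq_le[of N E x j] lap a b
    by (simp_all add: a_def b_def divide_le_eq mult.commute)
  have "R \<ge> 1 / a + 1 / b - (if adj E i j then 2 / (a * b) else 0)"
  proof (cases "adj E i j")
    case False
    then show ?thesis using energy Wi Wj by simp
  next
    case True
    have "R \<ge> 0"
      unfolding R_def potential_diff_eq_energy[OF x i j]
      by (simp add: local_energy_def sum_nonneg)
    moreover have "R \<ge> R^2 + (local_energy N E x i - R^2) + (local_energy N E x j - R^2)"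
      using energy True by simp
    moreover have "(1 - R)^2 \<le> (a - 1) * (local_energy N E x i - R^2)"
      using laplacian_minus_edge_sq_le[OF True j, of x] lap by (simp add: a_def R_def)
    moreover have "(1 - R)^2 \<le> (b - 1) * (local_energy N E x j - R^2)"
    proof -
      have "(laplacian N E x j - (x j - x i))^2 = (1 - R)^2" "(x j - x i)^2 = R^2"
        using lap by (simp_all add: R_def power2_eq_square algebra_simps)
      then show ?thesis
        using laplacian_minus_edge_sq_le[of E j i N x] True i adj_commute by (simp add: b_def)
    qed
    ultimately have "R \<ge> 1/a + 1/b - 2/(a*b)"
      by (rule resistance_bound_algebraic[OF a b])
    with True show ?thesis by simp
  qed
  then show ?thesis
    unfolding resistance_lower_bound_def eff_res_eq_potential_diff[OF sg cg x i j]
      R_def[symmetric] a_def[symmetric] b_def[symmetric] .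
qed

section \<open>Summing the bounds\<close>

lemma sum_sym_eq_lower_triangle:
  fixes g :: "nat \<Rightarrow> nat \<Rightarrow> 'a :: comm_semiring_1"
  assumes "\<And>i j. g i j = g j i"
  shows "(\<Sum>j<N. \<Sum>i<N. g i j) = 2 * (\<Sum>j<N. \<Sum>i<j. g i j) + (\<Sum>j<N. g j j)"
proof (induction N)
  case (Suc N)
  have "(\<Sum>j<N. g N j) = (\<Sum>i<N. g i N)"
    by (simp add: assms)
  with Suc show ?case
    by (simp add: sum.distrib mult_2 algebra_simps)
qed simp

lemma weighted_resistance_lower_bound_eq:
  assumes "degree N E i \<ge> 1" "degree N E j \<ge> 1"
  defines "d \<equiv> \<lambda>v. real (degree N E v)"
  shows "(d i + d j) * resistance_lower_bound N E i j = 2 + d i / d j + d j / d i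
      - ((if adj E i j then 2 / d i else 0) + (if adj E j i then 2 / d j else 0))"
  using assms by (cases "adj E i j") (simp_all add: resistance_lower_bound_def adj_commute field_simps)

lemma sum_sum_weighted_resistance_lower_bound:
  assumes sg: "simple_graph N E" and deg: "\<And>v. v < N \<Longrightarrow> degree N E v \<ge> 1"
  defines "d \<equiv> \<lambda>v. real (degree N E v)"
  shows "(\<Sum>j<N. \<Sum>i<N. (d i + d j) * resistance_lower_bound N E i j)
    = 2 * real N * real N + 4 * real (card E) * (\<Sum>j<N. 1 / d j) - 4 * real N"
proof -
  define H where "H = (\<Sum>j<N. 1 / d j)"
  have D: "(\<Sum>j<N. d j) = 2 * real (card E)"
    unfolding d_def using sum_degree_eq_twice_card_edges[OF sg] by (metis of_nat_mult of_nat_numeral of_nat_sum)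
  have neighbours: "(\<Sum>l<N. if adj E k l then 2 / d k else 0) = 2" if "k < N" for k
    using deg[OF that] by (simp add: sum_neighbours_const d_def)
  have swap: "(\<Sum>j<N. \<Sum>i<N. if adj E i j then 2 / d i else 0)
      = (\<Sum>i<N. \<Sum>j<N. if adj E i j then 2 / d i else 0)"
    by (rule sum.swap)
  have "(\<Sum>j<N. \<Sum>i<N. (d i + d j) * resistance_lower_bound N E i j)
      = (\<Sum>j<N. \<Sum>i<N. 2 + d i / d j + d j / d i
          - ((if adj E i j then 2 / d i else 0) + (if adj E j i then 2 / d j else 0)))"
    unfolding d_def using deg by (intro sum.cong refl weighted_resistance_lower_bound_eq) auto
  also have "\<dots> = 2 * real N * real N + (\<Sum>j<N. \<Sum>i<N. d i / d j) + (\<Sum>j<N. \<Sum>i<N. d j / d i)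
      - ((\<Sum>i<N. \<Sum>j<N. if adj E i j then 2 / d i else 0)
         + (\<Sum>j<N. \<Sum>i<N. if adj E j i then 2 / d j else 0))"
    by (simp add: sum.distrib sum_subtractf flip: swap)
  also have "(\<Sum>j<N. \<Sum>i<N. d i / d j) = 2 * real (card E) * H"
    by (simp add: D H_def sum_distrib_left flip: sum_divide_distrib)
  also have "(\<Sum>j<N. \<Sum>i<N. d j / d i) = (\<Sum>j<N. d j * H)"
    unfolding H_def by (simp add: sum_distrib_left)
  also have "\<dots> = 2 * real (card E) * H"
    by (simp add: D flip: sum_distrib_right)
  also have "(\<Sum>i<N. \<Sum>j<N. if adj E i j then 2 / d i else 0) = 2 * real N"
    by (simp add: neighbours)
  finally show ?thesis
    by (simp add: H_def)
qed

lemma sum_weighted_resistance_lower_bounds: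
  assumes sg: "simple_graph N E" and deg: "\<And>v. v < N \<Longrightarrow> degree N E v \<ge> 1"
  defines "d \<equiv> \<lambda>v. real (degree N E v)"
  shows "(\<Sum>j<N. \<Sum>i<j. (d i + d j) * resistance_lower_bound N E i j)
    = real N * (real N - 4) + 2 * real (card E) * (\<Sum>j<N. 1 / d j)"
proof -
  define g where "g i j = (d i + d j) * resistance_lower_bound N E i j" for i j
  have "g j j = 4" if "j < N" for j
    using deg[OF that] not_adj_self[OF sg]
    by (simp add: g_def d_def resistance_lower_bound_def field_simps)
  then have diag: "(\<Sum>j<N. g j j) = 4 * real N"
    by simp
  have "g i j = g j i" for i j
    by (simp add: g_def resistance_lower_bound_def adj_commute algebra_simps)
  then have "(\<Sum>j<N. \<Sum>i<j. g i j) = ((\<Sum>j<N. \<Sum>i<N. g i j) - (\<Sum>j<N. g j j)) / 2"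
    using sum_sym_eq_lower_triangle[of g N] by simp
  also have "(\<Sum>j<N. \<Sum>i<N. g i j)
      = 2 * real N * real N + 4 * real (card E) * (\<Sum>j<N. 1 / d j) - 4 * real N"
    using sum_sum_weighted_resistance_lower_bound[OF sg deg] by (simp add: g_def d_def)
  also have "(2 * real N * real N + 4 * real (card E) * (\<Sum>j<N. 1 / d j) - 4 * real N
      - (\<Sum>j<N. g j j)) / 2 = real N * (real N - 4) + 2 * real (card E) * (\<Sum>j<N. 1 / d j)"
    unfolding diag by (simp add: field_simps)
  finally show ?thesis
    by (simp add: g_def)
qed

theorem theorem1:
  fixes N :: nat and E :: "nat set set"
  assumes "N \<ge> 1"
    and "simple_graph N E"
    and "connected_graph N E"
  shows "add_deg_kirchhoff N E \<ge>
           real N * (real N - 4) + 2 * real (card E) * (\<Sum>j<N. 1 / real (degree N E j))"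
proof (cases "N = 1")
  case True
  then have "{u. u < N \<and> adj E u 0} = {}"
    using not_adj_self[OF assms(2)] by auto
  then have "degree N E 0 = 0"
    by (simp add: Defs.degree_def)
  with True show ?thesis
    by (simp add: add_deg_kirchhoff_def)
next
  case False
  then have N: "N \<ge> 2" using assms(1) by simp
  have "real N * (real N - 4) + 2 * real (card E) * (\<Sum>j<N. 1 / real (degree N E j))
      = (\<Sum>j<N. \<Sum>i<j. (real (degree N E i) + real (degree N E j)) * resistance_lower_bound N E i j)"
    using sum_weighted_resistance_lower_bounds[OF assms(2) degree_ge_1[OF assms(2,3) N]] by simp
  also have "\<dots> \<le> add_deg_kirchhoff N E"
    unfolding add_deg_kirchhoff_def
    using eff_res_ge_lower_bound[OF assms(2,3)]
    by (intro sum_mono mult_left_mono) auto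
  finally show ?thesis .
qed

end
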